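(* For $n\ge 1$ let $p_n=\Psi(P_n)$, $m_n=\Psi(M_n)$, $o_n=\Psi(O_n)$, and set $p_0=m_0=o_0=1$. Let $P(x)=\sum_{n\ge0}p_nx^n$, $M(x)=\sum_{n\ge0}m_nx^n$, $O(x)=\sum_{n\ge0}o_nx^n$ be the ordinary generating functions. Then $$P(x)=\frac{1+4x^2}{1-5x+4x^2-4x^3},\qquad M(x)=\frac{1-x-2x^2}{1-6x+3x^2-2x^3},\qquad O(x)=\frac{1+x+x^2}{1-4x-4x^2-x^3}.$$
   Context: All graphs are finite and simple. A matching of a graph $G$ is a set of edges no two of which share a vertex; it is maximal if it is not a proper subset of another matching of $G$. $\Psi(G)$ denotes the number of maximal matchings of $G$ (the empty graph has exactly one, the empty matching). A hexagonal cactus is a connected graph in which every block is a 6-cycle (hexagon). A chain hexagonal cactus is a hexagonal cactus in which each hexagon contains at most two cut-vertices and each cut-vertex is shared by exactly two hexagons; its length is the number of hexagons. In a chain of length $\ge 2$, exactly two hexagons contain one cut-vertex (terminal hexagons); the others contain two (internal hexagons). An internal hexagon is an ortho-, meta- or para-hexagon according as its two cut-vertices are at distance 1, 2 or 3 in the hexagon. $P_n$, $M_n$, $O_n$ denote the (unique up to isomorphism) chain hexagonal cacti of length $n$ all of whose internal hexagons are para-, meta-, resp. ortho-hexagons (for $n\le 2$ these coincide). *)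

theory Defs
  imports "HOL-Computational_Algebra.Formal_Power_Series"
begin

(* A simple graph is given by its edge set: a set of 2-element vertex sets. *)

definition matching :: "'a set set \<Rightarrow> 'a set set \<Rightarrow> bool" where
  "matching E M \<longleftrightarrow> M \<subseteq> E \<and> (\<forall>e\<in>M. \<forall>f\<in>M. e \<noteq> f \<longrightarrow> e \<inter> f = {})"

definition maximal_matching :: "'a set set \<Rightarrow> 'a set set \<Rightarrow> bool" where
  "maximal_matching E M \<longleftrightarrow>
     matching E M \<and> (\<forall>M'. matching E M' \<and> M \<subseteq> M' \<longrightarrow> M' = M)"

definition Psi :: "'a set set \<Rightarrow> nat" where
  "Psi E = card {M. maximal_matching E M}"

(* Chain hexagonal cactus of length n in which every internal hexagon has
   its two cut-vertices at distance d (d = 1 ortho, 2 meta, 3 para).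
   Hexagon k (k < n) is the 6-cycle
     hex_entry d k, 5k+1, 5k+2, 5k+3, 5k+4, 5k+5, hex_entry d k,
   and hexagon k+1 is attached at vertex 5k+d of hexagon k, which is at
   distance d from hex_entry d k along the cycle. *)
definition hex_entry :: "nat \<Rightarrow> nat \<Rightarrow> nat" where
  "hex_entry d k = (if k = 0 then 0 else 5 * (k - 1) + d)"

definition hex_edges :: "nat \<Rightarrow> nat \<Rightarrow> nat set set" where
  "hex_edges d k =
     {{hex_entry d k, 5*k+1}, {5*k+1, 5*k+2}, {5*k+2, 5*k+3},
      {5*k+3, 5*k+4}, {5*k+4, 5*k+5}, {5*k+5, hex_entry d k}}"

definition chain_edges :: "nat \<Rightarrow> nat \<Rightarrow> nat set set" where
  "chain_edges d n = (\<Union>k<n. hex_edges d k)"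

abbreviation para_chain :: "nat \<Rightarrow> nat set set" where "para_chain n \<equiv> chain_edges 3 n"
abbreviation meta_chain :: "nat \<Rightarrow> nat set set" where "meta_chain n \<equiv> chain_edges 2 n"
abbreviation ortho_chain :: "nat \<Rightarrow> nat set set" where "ortho_chain n \<equiv> chain_edges 1 n"

definition psi_seq :: "nat \<Rightarrow> nat \<Rightarrow> nat" where
  "psi_seq d n = (if n = 0 then 1 else Psi (chain_edges d n))"

end

(* A matching of a graph glued from G and H at a single vertex c splits into a matching of G and
   one of H, and it is maximal iff, according to which side covers c (G, H or neither), the two
   parts are maximal subject to boundary conditions at c: c has to stay uncovered, and edges at c
   may be excused from being dominated because the other side dominates them. Attaching the
   hexagons of a chain one at a time, the numbers of maximal matchings with the boundary states
   "free", "uncovered" and "uncovered and excused" at the last cut vertex thus satisfy a linear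
   recurrence whose coefficients are such counts for a single hexagon. Eliminating the two
   auxiliary states leaves a third-order linear recurrence for Psi, i.e. a rational generating
   function with cubic denominator. *)

theory Submission
  imports Defs
begin

section \<open>Maximal matchings with boundary conditions\<close>

definition dominates :: "'a set set \<Rightarrow> 'a set \<Rightarrow> 'a set set \<Rightarrow> bool" where
  "dominates E X M \<longleftrightarrow> (\<forall>e\<in>E. e \<inter> X = {} \<longrightarrow> (\<exists>f\<in>M. e \<inter> f \<noteq> {}))"

definition restricted_maximal_matching ::
    "'a set set \<Rightarrow> 'a set \<Rightarrow> 'a set \<Rightarrow> 'a set set \<Rightarrow> bool" where
  "restricted_maximal_matching E F X M \<longleftrightarrow> matching E M \<and> \<Union>M \<inter> F = {} \<and> dominates E X M"

definition Psi_restr :: "'a set set \<Rightarrow> 'a set \<Rightarrow> 'a set \<Rightarrow> nat" where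
  "Psi_restr E F X = card {M. restricted_maximal_matching E F X M}"

lemma finite_restricted_maximal_matchings:
  "finite E \<Longrightarrow> finite {M. restricted_maximal_matching E F X M}"
  by (rule finite_subset[of _ "Pow E"]) (auto simp: restricted_maximal_matching_def matching_def)

lemma restricted_maximal_matching_insert_forbidden:
  "restricted_maximal_matching E (insert c F) X M \<longleftrightarrow>
     restricted_maximal_matching E F X M \<and> c \<notin> \<Union>M"
  by (auto simp: restricted_maximal_matching_def)

lemma card_restricted_maximal_matchings_covering:
  assumes "finite E"
  shows "int (card {M. restricted_maximal_matching E F X M \<and> c \<in> \<Union>M}) =
           int (Psi_restr E F X) - int (Psi_restr E (insert c F) X)"
proof -
  let ?S = "{M. restricted_maximal_matching E F X M}"
  have split: "?S = {M \<in> ?S. c \<in> \<Union>M} \<union> {M. restricted_maximal_matching E (insert c F) X M}"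
    by (auto simp: restricted_maximal_matching_insert_forbidden)
  have "card ?S = card {M \<in> ?S. c \<in> \<Union>M} + Psi_restr E (insert c F) X"
    unfolding Psi_restr_def
    by (subst split, rule card_Un_disjoint)
       (use finite_restricted_maximal_matchings[OF assms] in
         \<open>auto simp: restricted_maximal_matching_insert_forbidden\<close>)
  then show ?thesis by (simp add: Psi_restr_def)
qed

lemma restricted_maximal_matching_iff_maximal:
  assumes "{} \<notin> E"
  shows "restricted_maximal_matching E {} {} M \<longleftrightarrow> maximal_matching E M"
proof
  assume R: "restricted_maximal_matching E {} {} M"
  then have m: "matching E M" and dom: "\<And>e. e \<in> E \<Longrightarrow> \<exists>f\<in>M. e \<inter> f \<noteq> {}"
    unfolding restricted_maximal_matching_def dominates_def by auto
  have "M' = M" if m': "matching E M'" and "M \<subseteq> M'" for M'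
  proof (rule ccontr)
    assume "M' \<noteq> M"
    then obtain e where "e \<in> M'" "e \<notin> M" using \<open>M \<subseteq> M'\<close> by blast
    moreover have "e \<in> E" using m' \<open>e \<in> M'\<close> unfolding matching_def by blast
    then obtain f where "f \<in> M" "e \<inter> f \<noteq> {}" using dom by blast
    moreover have "f \<in> M'" "e \<noteq> f" using \<open>f \<in> M\<close> \<open>e \<notin> M\<close> \<open>M \<subseteq> M'\<close> by blast+
    ultimately show False using m' unfolding matching_def by metis
  qed
  with m show "maximal_matching E M" unfolding maximal_matching_def by blast
next
  assume "maximal_matching E M"
  then have m: "matching E M" and max: "\<And>M'. matching E M' \<Longrightarrow> M \<subseteq> M' \<Longrightarrow> M' = M"
    unfolding maximal_matching_def by blast+
  have "\<exists>f\<in>M. e \<inter> f \<noteq> {}" if "e \<in> E" for e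
  proof (rule ccontr)
    assume free: "\<not> (\<exists>f\<in>M. e \<inter> f \<noteq> {})"
    then have "matching E (insert e M)"
      using m \<open>e \<in> E\<close> unfolding matching_def by (simp add: Int_commute)
    then have "e \<in> M" using max by blast
    moreover have "e \<inter> e \<noteq> {}" using \<open>e \<in> E\<close> assms by auto
    ultimately show False using free by blast
  qed
  with m show "restricted_maximal_matching E {} {} M"
    unfolding restricted_maximal_matching_def dominates_def by simp
qed

lemma Psi_eq_Psi_restr: "{} \<notin> E \<Longrightarrow> Psi E = Psi_restr E {} {}"
  by (simp add: Psi_def Psi_restr_def restricted_maximal_matching_iff_maximal)

section \<open>Gluing at a cut vertex\<close>

lemma matching_Un_iff:
  assumes "A \<subseteq> G" "B \<subseteq> H" "G \<inter> H = {}" "\<Union>G \<inter> \<Union>H \<subseteq> {c}"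
  shows "matching (G \<union> H) (A \<union> B) \<longleftrightarrow>
           matching G A \<and> matching H B \<and> \<not> (c \<in> \<Union>A \<and> c \<in> \<Union>B)"
proof
  assume M: "matching (G \<union> H) (A \<union> B)"
  have "\<not> (c \<in> \<Union>A \<and> c \<in> \<Union>B)"
  proof
    assume "c \<in> \<Union>A \<and> c \<in> \<Union>B"
    then obtain a b where "a \<in> A" "b \<in> B" "c \<in> a" "c \<in> b" by blast
    moreover have "a \<noteq> b" using \<open>a \<in> A\<close> \<open>b \<in> B\<close> assms(1-3) by blast
    ultimately show False using M unfolding matching_def by blast
  qed
  moreover have "matching G A" "matching H B"
    using M assms(1,2) unfolding matching_def by blast+
  ultimately show "matching G A \<and> matching H B \<and> \<not> (c \<in> \<Union>A \<and> c \<in> \<Union>B)" by blast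
next
  assume M: "matching G A \<and> matching H B \<and> \<not> (c \<in> \<Union>A \<and> c \<in> \<Union>B)"
  have cross: "a \<inter> b = {}" "b \<inter> a = {}" if "a \<in> A" "b \<in> B" for a b
  proof -
    have "a \<inter> b \<subseteq> {c}" using that assms(1,2,4) by blast
    then show "a \<inter> b = {}" "b \<inter> a = {}" using M that by blast+
  qed
  show "matching (G \<union> H) (A \<union> B)" unfolding matching_def
  proof (intro conjI ballI impI)
    show "A \<union> B \<subseteq> G \<union> H" using assms(1,2) by blast
  next
    fix e f assume "e \<in> A \<union> B" "f \<in> A \<union> B" "e \<noteq> f"
    then show "e \<inter> f = {}"
      using M cross unfolding matching_def by (elim UnE) simp_all
  qed
qed

lemma dominates_Un_iff:
  assumes "A \<subseteq> G" "B \<subseteq> H" "\<Union>G \<inter> \<Union>H \<subseteq> {c}" "X \<inter> \<Union>G = {}"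
  shows "dominates (G \<union> H) X (A \<union> B) \<longleftrightarrow>
           dominates G ({c} \<inter> \<Union>B) A \<and> dominates H (X \<union> ({c} \<inter> \<Union>A)) B"
proof -
  have meet: "(\<exists>f\<in>F'. e \<inter> f \<noteq> {}) \<longleftrightarrow> e \<inter> ({c} \<inter> \<Union>F') \<noteq> {}"
    if "\<And>f. f \<in> F' \<Longrightarrow> e \<inter> f \<subseteq> {c}" for e F'
    using that by blast
  have GB: "(\<exists>f\<in>B. e \<inter> f \<noteq> {}) \<longleftrightarrow> e \<inter> ({c} \<inter> \<Union>B) \<noteq> {}" if "e \<in> G" for e
    by (rule meet) (use that assms(2,3) in blast)
  have HA: "(\<exists>f\<in>A. e \<inter> f \<noteq> {}) \<longleftrightarrow> e \<inter> ({c} \<inter> \<Union>A) \<noteq> {}" if "e \<in> H" for e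
    by (rule meet) (use that assms(1,3) in blast)
  have GX: "e \<inter> X = {}" if "e \<in> G" for e using that assms(4) by blast
  show ?thesis
    unfolding dominates_def ball_Un bex_Un
    by (simp add: GB HA GX Int_Un_distrib cong: ball_cong) blast
qed

lemma restricted_maximal_matching_Un_iff:
  assumes AB: "A \<subseteq> G" "B \<subseteq> H" and GH: "G \<inter> H = {}" "\<Union>G \<inter> \<Union>H \<subseteq> {c}"
    and FX: "(F \<union> X) \<inter> \<Union>G = {}"
  shows "restricted_maximal_matching (G \<union> H) F X (A \<union> B) \<longleftrightarrow>
     (c \<in> \<Union>A \<and> restricted_maximal_matching G {} {} A \<and>
        restricted_maximal_matching H (insert c F) (insert c X) B) \<or>
     (c \<in> \<Union>B \<and> restricted_maximal_matching G {c} {c} A \<and> restricted_maximal_matching H F X B) \<or>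
     (restricted_maximal_matching G {c} {} A \<and> restricted_maximal_matching H (insert c F) X B)"
proof -
  have "\<Union>A \<inter> F = {}" using AB FX by blast
  then have "\<Union>(A \<union> B) \<inter> F = {} \<longleftrightarrow> \<Union>B \<inter> F = {}" by blast
  moreover have "X \<inter> \<Union>G = {}" using FX by blast
  ultimately show ?thesis
    unfolding restricted_maximal_matching_def matching_Un_iff[OF AB GH]
      dominates_Un_iff[OF AB GH(2) \<open>X \<inter> \<Union>G = {}\<close>]
    by (cases "c \<in> \<Union>A"; cases "c \<in> \<Union>B") auto
qed

lemma card_pairs_of_subsets:
  assumes "G \<inter> H = {}"
  shows "card {M. M \<subseteq> G \<union> H \<and> P M} = card {(A, B). A \<subseteq> G \<and> B \<subseteq> H \<and> P (A \<union> B)}"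
proof -
  let ?pairs = "{(A, B). A \<subseteq> G \<and> B \<subseteq> H \<and> P (A \<union> B)}"
  have "inj_on (\<lambda>(A, B). A \<union> B) ?pairs"
  proof (rule inj_onI, clarsimp)
    fix A B A' B'
    assume "A \<subseteq> G" "B \<subseteq> H" "A' \<subseteq> G" "B' \<subseteq> H" and eq: "A \<union> B = A' \<union> B'"
    then have "A = (A \<union> B) \<inter> G" "A' = (A' \<union> B') \<inter> G" "B = (A \<union> B) \<inter> H" "B' = (A' \<union> B') \<inter> H"
      using assms by blast+
    then show "A = A' \<and> B = B'" using eq by metis
  qed
  moreover have "{M. M \<subseteq> G \<union> H \<and> P M} = (\<lambda>(A, B). A \<union> B) ` ?pairs"
  proof (intro equalityI subsetI)
    fix M assume M: "M \<in> {M. M \<subseteq> G \<union> H \<and> P M}"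
    then have split: "M = M \<inter> G \<union> M \<inter> H" by blast
    then have "(M \<inter> G, M \<inter> H) \<in> ?pairs" using M by (simp flip: split)
    with split show "M \<in> (\<lambda>(A, B). A \<union> B) ` ?pairs" by (metis (no_types, lifting) case_prod_conv image_eqI)
  qed auto
  ultimately show ?thesis by (simp add: card_image)
qed

(* The three products count the pairs in which c is covered by the matching of G, by that of H,
   or by neither. *)
lemma Psi_restr_Un:
  assumes fin: "finite G" "finite H" and GH: "G \<inter> H = {}" "\<Union>G \<inter> \<Union>H \<subseteq> {c}"
    and FX: "(F \<union> X) \<inter> \<Union>G = {}"
  shows "int (Psi_restr (G \<union> H) F X) =
     (int (Psi_restr G {} {}) - int (Psi_restr G {c} {})) * int (Psi_restr H (insert c F) (insert c X))
   + int (Psi_restr G {c} {c}) * (int (Psi_restr H F X) - int (Psi_restr H (insert c F) X))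
   + int (Psi_restr G {c} {}) * int (Psi_restr H (insert c F) X)"
proof -
  let ?R = restricted_maximal_matching
  define X1 where "X1 = {A. ?R G {} {} A \<and> c \<in> \<Union>A}"
  define Y1 where "Y1 = {B. ?R H (insert c F) (insert c X) B}"
  define X2 where "X2 = {A. ?R G {c} {c} A}"
  define Y2 where "Y2 = {B. ?R H F X B \<and> c \<in> \<Union>B}"
  define X3 where "X3 = {A. ?R G {c} {} A}"
  define Y3 where "Y3 = {B. ?R H (insert c F) X B}"
  have sub: "M \<subseteq> E" if "?R E F' X' M" for E F' X' M
    using that by (simp add: restricted_maximal_matching_def matching_def)
  have "{M. ?R (G \<union> H) F X M} = {M. M \<subseteq> G \<union> H \<and> ?R (G \<union> H) F X M}"
    using sub by blast
  then have "Psi_restr (G \<union> H) F X = card {(A, B). A \<subseteq> G \<and> B \<subseteq> H \<and> ?R (G \<union> H) F X (A \<union> B)}"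
    unfolding Psi_restr_def using card_pairs_of_subsets[OF GH(1)] by simp
  also have "{(A, B). A \<subseteq> G \<and> B \<subseteq> H \<and> ?R (G \<union> H) F X (A \<union> B)} = X1 \<times> Y1 \<union> X2 \<times> Y2 \<union> X3 \<times> Y3"
  proof -
    have "A \<subseteq> G \<and> B \<subseteq> H \<and> ?R (G \<union> H) F X (A \<union> B) \<longleftrightarrow>
            (A, B) \<in> X1 \<times> Y1 \<union> X2 \<times> Y2 \<union> X3 \<times> Y3" for A B
    proof (cases "A \<subseteq> G \<and> B \<subseteq> H")
      case True
      then show ?thesis
        unfolding X1_def Y1_def X2_def Y2_def X3_def Y3_def
        using restricted_maximal_matching_Un_iff[OF _ _ GH FX, of A B] by auto
    next
      case False
      then show ?thesis unfolding X1_def Y1_def X2_def Y2_def X3_def Y3_def using sub by blast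
    qed
    then show ?thesis by auto
  qed
  also have "card (X1 \<times> Y1 \<union> X2 \<times> Y2 \<union> X3 \<times> Y3) =
               card X1 * card Y1 + card X2 * card Y2 + card X3 * card Y3"
  proof -
    have "finite X1" "finite X2" "finite X3" "finite Y1" "finite Y2" "finite Y3"
      unfolding X1_def Y1_def X2_def Y2_def X3_def Y3_def
      using finite_restricted_maximal_matchings fin by (auto intro: finite_subset)
    moreover have "X1 \<inter> X2 = {}" "X1 \<inter> X3 = {}" "Y2 \<inter> Y3 = {}"
      unfolding X1_def X2_def X3_def Y2_def Y3_def
      by (auto simp: restricted_maximal_matching_insert_forbidden)
    ultimately have "X1 \<times> Y1 \<inter> X2 \<times> Y2 = {}" "(X1 \<times> Y1 \<union> X2 \<times> Y2) \<inter> X3 \<times> Y3 = {}"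
      and "finite (X1 \<times> Y1)" "finite (X2 \<times> Y2)" "finite (X3 \<times> Y3)" by blast+
    then show ?thesis by (simp add: card_Un_disjoint card_cartesian_product)
  qed
  finally have "int (Psi_restr (G \<union> H) F X) =
      int (card X1) * int (card Y1) + int (card X2) * int (card Y2) + int (card X3) * int (card Y3)"
    by simp
  moreover have "int (card X1) = int (Psi_restr G {} {}) - int (Psi_restr G {c} {})"
    "int (card Y2) = int (Psi_restr H F X) - int (Psi_restr H (insert c F) X)"
    unfolding X1_def Y2_def by (simp_all only: card_restricted_maximal_matchings_covering fin)
  moreover have "card Y1 = Psi_restr H (insert c F) (insert c X)" "card X2 = Psi_restr G {c} {c}"
    "card X3 = Psi_restr G {c} {}" "card Y3 = Psi_restr H (insert c F) X"
    unfolding Y1_def X2_def X3_def Y3_def Psi_restr_def by simp_all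
  ultimately show ?thesis by simp
qed

section \<open>Relabelling and the hexagon\<close>

lemma restricted_maximal_matching_image_iff:
  assumes inj: "inj_on f V" and V: "\<Union>E \<subseteq> V" "F \<subseteq> V" "X \<subseteq> V" and "M \<subseteq> E"
  shows "restricted_maximal_matching ((`) f ` E) (f ` F) (f ` X) ((`) f ` M) \<longleftrightarrow>
           restricted_maximal_matching E F X M"
proof -
  have eq: "f ` A = f ` B \<longleftrightarrow> A = B" if "A \<subseteq> V" "B \<subseteq> V" for A B
    using inj_on_image_eq_iff[OF inj that] .
  have disj: "f ` A \<inter> f ` B = {} \<longleftrightarrow> A \<inter> B = {}" if "A \<subseteq> V" "B \<subseteq> V" for A B
    using inj_on_image_Int[OF inj that] by (metis image_is_empty)
  have sub: "e \<subseteq> V" if "e \<in> E" for e using that V(1) by blast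
  have "\<Union>M \<subseteq> V" using \<open>M \<subseteq> E\<close> V(1) by blast
  then have "\<Union>((`) f ` M) \<inter> f ` F = {} \<longleftrightarrow> \<Union>M \<inter> F = {}"
    using disj[OF _ V(2)] by (simp flip: image_Union)
  moreover have "(\<forall>e\<in>M. \<forall>e'\<in>M. f ` e \<noteq> f ` e' \<longrightarrow> f ` e \<inter> f ` e' = {}) \<longleftrightarrow>
                   (\<forall>e\<in>M. \<forall>e'\<in>M. e \<noteq> e' \<longrightarrow> e \<inter> e' = {})"
    using \<open>M \<subseteq> E\<close> sub eq disj by (meson subsetD)
  moreover have "dominates ((`) f ` E) (f ` X) ((`) f ` M) \<longleftrightarrow> dominates E X M"
  proof -
    have "f ` e \<inter> f ` X = {} \<longleftrightarrow> e \<inter> X = {}" if "e \<in> E" for e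
      using disj[OF sub[OF that] V(3)] .
    moreover have "f ` e \<inter> f ` e' = {} \<longleftrightarrow> e \<inter> e' = {}" if "e \<in> E" "e' \<in> M" for e e'
      using disj[OF sub[OF that(1)] sub] that \<open>M \<subseteq> E\<close> by blast
    ultimately show ?thesis unfolding dominates_def by (simp cong: ball_cong bex_cong)
  qed
  ultimately show ?thesis
    using \<open>M \<subseteq> E\<close> unfolding restricted_maximal_matching_def matching_def by (simp add: image_mono)
qed

lemma Psi_restr_image:
  assumes inj: "inj_on f V" and V: "\<Union>E \<subseteq> V" "F \<subseteq> V" "X \<subseteq> V"
  shows "Psi_restr ((`) f ` E) (f ` F) (f ` X) = Psi_restr E F X"
proof -
  let ?R = restricted_maximal_matching
  have "inj_on ((`) f) E"
    by (rule inj_onI) (use inj_on_image_eq_iff[OF inj] V(1) in blast)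
  then have inj_matchings: "inj_on ((`) ((`) f)) (Pow E)"
    by (rule inj_on_image_Pow)
  have sub: "M \<subseteq> E'" if "?R E' F' X' M" for E' F' X' M
    using that by (simp add: restricted_maximal_matching_def matching_def)
  have "{M'. ?R ((`) f ` E) (f ` F) (f ` X) M'} = (`) ((`) f) ` {M. ?R E F X M}"
  proof (intro equalityI subsetI)
    fix M' assume M': "M' \<in> {M'. ?R ((`) f ` E) (f ` F) (f ` X) M'}"
    define M where "M = {e \<in> E. f ` e \<in> M'}"
    have "M' \<subseteq> (`) f ` E" using M' sub by blast
    then have "M' = (`) f ` M" unfolding M_def by blast
    moreover have "?R E F X M"
      using M' \<open>M' = (`) f ` M\<close> restricted_maximal_matching_image_iff[OF assms, of M]
      unfolding M_def by simp
    ultimately show "M' \<in> (`) ((`) f) ` {M. ?R E F X M}" by blast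
  next
    fix M' assume "M' \<in> (`) ((`) f) ` {M. ?R E F X M}"
    then obtain M where "?R E F X M" "M' = (`) f ` M" by blast
    then show "M' \<in> {M'. ?R ((`) f ` E) (f ` F) (f ` X) M'}"
      using restricted_maximal_matching_image_iff[OF assms sub] by simp
  qed
  moreover have "inj_on ((`) ((`) f)) {M. ?R E F X M}"
    using inj_matchings by (rule inj_on_subset) (use sub in blast)
  ultimately show ?thesis unfolding Psi_restr_def by (simp add: card_image)
qed

lemma sorted_wrt_iff_pairwise:
  assumes "symp R" "distinct xs"
  shows "sorted_wrt R xs \<longleftrightarrow> (\<forall>x\<in>set xs. \<forall>y\<in>set xs. x \<noteq> y \<longrightarrow> R x y)"
  using assms(2) by (induction xs) (auto intro: sympD[OF assms(1)])

(* Checking disjointness only along the list (sorted_wrt) keeps the enumeration by simp cheap. *)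
lemma Psi_restr_set_eq_length_filter:
  assumes "distinct es"
  shows "Psi_restr (set es) F X =
           length (filter (\<lambda>ms. sorted_wrt (\<lambda>e f. e \<inter> f = {}) ms \<and> \<Union>(set ms) \<inter> F = {}
                                  \<and> dominates (set es) X (set ms)) (subseqs es))"
    (is "_ = length (filter ?P _)")
proof -
  let ?R = "restricted_maximal_matching (set es) F X"
  have "{M. ?R M} = set (filter ?R (map set (subseqs es)))"
    using subseqs_powset[of es]
    by (auto simp: restricted_maximal_matching_def matching_def)
  then have "Psi_restr (set es) F X = length (filter ?R (map set (subseqs es)))"
    unfolding Psi_restr_def by (simp only: distinct_card distinct_filter distinct_set_subseqs assms)
  also have "\<dots> = length (filter (?R \<circ> set) (subseqs es))"
    by (simp add: filter_map)
  also have "filter (?R \<circ> set) (subseqs es) = filter ?P (subseqs es)"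
  proof (rule filter_cong)
    fix ms assume ms: "ms \<in> set (subseqs es)"
    then have "distinct ms" "set ms \<subseteq> set es"
      using subseqs_distinctD[OF ms assms] subseqs_powset[of es] by auto
    then show "(?R \<circ> set) ms = ?P ms"
      by (simp add: restricted_maximal_matching_def matching_def sorted_wrt_iff_pairwise symp_def
          Int_commute)
  qed simp
  finally show ?thesis .
qed

definition cycle6 :: "nat set set" where
  "cycle6 = set [{0,1}, {1,2}, {2,3}, {3,4}, {4,5}, {5,0}]"

lemma Psi_restr_cycle6:
  "Psi_restr cycle6 {0} {0} = 3" "Psi_restr cycle6 {} {} = 5" "Psi_restr cycle6 {0} {} = 1"
  "Psi_restr cycle6 {0,3} {0} = 1" "Psi_restr cycle6 {3} {} = 1" "Psi_restr cycle6 {0,3} {} = 1"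
  "Psi_restr cycle6 {0,3} {0,3} = 1" "Psi_restr cycle6 {3} {3} = 3" "Psi_restr cycle6 {0,3} {3} = 1"
  "Psi_restr cycle6 {0,2} {0} = 0" "Psi_restr cycle6 {2} {} = 1" "Psi_restr cycle6 {0,2} {} = 0"
  "Psi_restr cycle6 {0,2} {0,2} = 2" "Psi_restr cycle6 {2} {2} = 3" "Psi_restr cycle6 {0,2} {2} = 0"
  "Psi_restr cycle6 {0,1} {0} = 1" "Psi_restr cycle6 {1} {} = 1" "Psi_restr cycle6 {0,1} {} = 0"
  "Psi_restr cycle6 {0,1} {0,1} = 2" "Psi_restr cycle6 {1} {1} = 3" "Psi_restr cycle6 {0,1} {1} = 1"
proof -
  have "distinct [{0,1}, {1,2}, {2,3}, {3,4}, {4,5}, {5,0::nat}]" by (simp add: doubleton_eq_iff)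
  then show "Psi_restr cycle6 {0} {0} = 3" "Psi_restr cycle6 {} {} = 5" "Psi_restr cycle6 {0} {} = 1"
    "Psi_restr cycle6 {0,3} {0} = 1" "Psi_restr cycle6 {3} {} = 1" "Psi_restr cycle6 {0,3} {} = 1"
    "Psi_restr cycle6 {0,3} {0,3} = 1" "Psi_restr cycle6 {3} {3} = 3" "Psi_restr cycle6 {0,3} {3} = 1"
    "Psi_restr cycle6 {0,2} {0} = 0" "Psi_restr cycle6 {2} {} = 1" "Psi_restr cycle6 {0,2} {} = 0"
    "Psi_restr cycle6 {0,2} {0,2} = 2" "Psi_restr cycle6 {2} {2} = 3" "Psi_restr cycle6 {0,2} {2} = 0"
    "Psi_restr cycle6 {0,1} {0} = 1" "Psi_restr cycle6 {1} {} = 1" "Psi_restr cycle6 {0,1} {} = 0"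
    "Psi_restr cycle6 {0,1} {0,1} = 2" "Psi_restr cycle6 {1} {1} = 3" "Psi_restr cycle6 {0,1} {1} = 1"
    unfolding cycle6_def Psi_restr_set_eq_length_filter[OF \<open>distinct _\<close>]
    by (simp_all add: dominates_def ex_disj_distrib)
qed

(* Places the standard hexagon cycle6 as hexagon k of the chain: vertex 0 becomes its entry cut
   vertex, vertex d its exit cut vertex hex_entry d (Suc k). *)
definition hex_vertex :: "nat \<Rightarrow> nat \<Rightarrow> nat \<Rightarrow> nat" where
  "hex_vertex d k i = (if i = 0 then hex_entry d k else 5 * k + i)"

lemma hex_edges_eq_image: "hex_edges d k = (`) (hex_vertex d k) ` cycle6"
  by (simp add: hex_edges_def cycle6_def hex_vertex_def insert_commute)

lemma inj_on_hex_vertex: "d \<le> 5 \<Longrightarrow> inj_on (hex_vertex d k) {0..5}"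
  by (auto simp: inj_on_def hex_vertex_def hex_entry_def)

lemma Psi_restr_hex_edges:
  assumes "d \<le> 5" "F \<subseteq> {0..5}" "X \<subseteq> {0..5}"
  shows "Psi_restr (hex_edges d k) (hex_vertex d k ` F) (hex_vertex d k ` X) = Psi_restr cycle6 F X"
  unfolding hex_edges_eq_image
  by (rule Psi_restr_image[OF inj_on_hex_vertex]) (use assms in \<open>auto simp: cycle6_def\<close>)

section \<open>Chains\<close>

lemma chain_edges_Suc: "chain_edges d (Suc n) = chain_edges d n \<union> hex_edges d n"
  by (simp add: chain_edges_def lessThan_Suc Un_commute)

lemma finite_hex_edges: "finite (hex_edges d k)"
  by (simp add: hex_edges_def)

lemma finite_chain_edges: "finite (chain_edges d n)"
  by (simp add: chain_edges_def finite_hex_edges)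

lemma empty_notin_chain_edges: "{} \<notin> chain_edges d n"
  by (auto simp: chain_edges_def hex_edges_def)

lemma vertex_hex_edges:
  "x \<in> \<Union>(hex_edges d k) \<Longrightarrow> x = hex_entry d k \<or> 5 * k < x \<and> x \<le> 5 * k + 5"
  by (auto simp: hex_edges_def)

lemma hex_edges_new_vertex: "e \<in> hex_edges d k \<Longrightarrow> \<exists>x\<in>e. 5 * k < x"
  by (auto simp: hex_edges_def)

lemma vertex_chain_edges_le:
  assumes "d \<le> 5" "x \<in> \<Union>(chain_edges d n)"
  shows "x \<le> 5 * n"
proof -
  obtain k where "k < n" "x \<in> \<Union>(hex_edges d k)" using assms(2) by (auto simp: chain_edges_def)
  then show ?thesis using vertex_hex_edges[of x d k] assms(1) by (auto simp: hex_entry_def)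
qed

(* The three boundary states at the exit vertex hex_entry d n, where the next hexagon is attached. *)
definition chain_free :: "nat \<Rightarrow> nat \<Rightarrow> int" where
  "chain_free d n = int (Psi_restr (chain_edges d n) {} {})"

definition chain_uncovered :: "nat \<Rightarrow> nat \<Rightarrow> int" where
  "chain_uncovered d n = int (Psi_restr (chain_edges d n) {hex_entry d n} {})"

definition chain_excused :: "nat \<Rightarrow> nat \<Rightarrow> int" where
  "chain_excused d n = int (Psi_restr (chain_edges d n) {hex_entry d n} {hex_entry d n})"

lemma Psi_restr_chain_edges_Suc:
  assumes d: "1 \<le> d" "d \<le> 5" and FX: "F \<subseteq> {d}" "X \<subseteq> {d}"
  shows "int (Psi_restr (chain_edges d (Suc n)) (hex_vertex d n ` F) (hex_vertex d n ` X)) =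
     (chain_free d n - chain_uncovered d n) * int (Psi_restr cycle6 (insert 0 F) (insert 0 X))
   + chain_excused d n * (int (Psi_restr cycle6 F X) - int (Psi_restr cycle6 (insert 0 F) X))
   + chain_uncovered d n * int (Psi_restr cycle6 (insert 0 F) X)"
proof -
  let ?G = "chain_edges d n" and ?H = "hex_edges d n" and ?c = "hex_entry d n" and ?v = "hex_vertex d n"
  have G_le: "x \<le> 5 * n" if "x \<in> \<Union>?G" for x using vertex_chain_edges_le[OF d(2) that] .
  have "?v 0 = ?c" by (simp add: hex_vertex_def)
  have "e \<notin> ?G" if "e \<in> ?H" for e
  proof
    assume "e \<in> ?G"
    obtain x where "x \<in> e" "5 * n < x" using hex_edges_new_vertex \<open>e \<in> ?H\<close> by blast
    then show False using G_le[of x] \<open>e \<in> ?G\<close> by auto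
  qed
  then have "?G \<inter> ?H = {}" by blast
  moreover have "\<Union>?G \<inter> \<Union>?H \<subseteq> {?c}"
  proof
    fix x assume "x \<in> \<Union>?G \<inter> \<Union>?H"
    then show "x \<in> {?c}" using G_le[of x] vertex_hex_edges[of x d n] by auto
  qed
  moreover have "(?v ` F \<union> ?v ` X) \<inter> \<Union>?G = {}"
  proof -
    have "x = 5 * n + d" if "x \<in> ?v ` F \<union> ?v ` X" for x
      using that FX d by (auto simp: hex_vertex_def)
    then have "x \<notin> \<Union>?G" if "x \<in> ?v ` F \<union> ?v ` X" for x
      using that G_le[of x] d by fastforce
    then show ?thesis by blast
  qed
  ultimately have "int (Psi_restr (?G \<union> ?H) (?v ` F) (?v ` X)) =
     (int (Psi_restr ?G {} {}) - int (Psi_restr ?G {?c} {})) * int (Psi_restr ?H (?v ` insert 0 F) (?v ` insert 0 X))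
   + int (Psi_restr ?G {?c} {?c}) * (int (Psi_restr ?H (?v ` F) (?v ` X)) - int (Psi_restr ?H (?v ` insert 0 F) (?v ` X)))
   + int (Psi_restr ?G {?c} {}) * int (Psi_restr ?H (?v ` insert 0 F) (?v ` X))"
    unfolding image_insert \<open>?v 0 = ?c\<close> by (rule Psi_restr_Un[OF finite_chain_edges finite_hex_edges])
  moreover have "insert 0 F \<subseteq> {0..5}" "insert 0 X \<subseteq> {0..5}" "F \<subseteq> {0..5}" "X \<subseteq> {0..5}"
    using FX d by auto
  ultimately show ?thesis
    unfolding chain_edges_Suc chain_free_def chain_uncovered_def chain_excused_def
    by (simp only: Psi_restr_hex_edges d(2))
qed

lemma chain_state_0: "chain_free d 0 = 1" "chain_uncovered d 0 = 1" "chain_excused d 0 = 1"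
proof -
  have "{M. restricted_maximal_matching {} F X M} = {{}}" for F X :: "nat set"
    by (auto simp: restricted_maximal_matching_def matching_def dominates_def)
  then show "chain_free d 0 = 1" "chain_uncovered d 0 = 1" "chain_excused d 0 = 1"
    by (simp_all add: chain_free_def chain_uncovered_def chain_excused_def chain_edges_def Psi_restr_def)
qed

lemma hex_vertex_exit: "0 < d \<Longrightarrow> hex_vertex d n d = hex_entry d (Suc n)"
  by (simp add: hex_vertex_def hex_entry_def)

lemma chain_state_Suc:
  assumes "1 \<le> d" "d \<le> 5"
  shows "chain_free d (Suc n) = 3 * chain_free d n - 2 * chain_uncovered d n + 4 * chain_excused d n"
    and "chain_uncovered d (Suc n) =
           (chain_free d n - chain_uncovered d n) * int (Psi_restr cycle6 {0, d} {0})
           + chain_excused d n * (int (Psi_restr cycle6 {d} {}) - int (Psi_restr cycle6 {0, d} {}))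
           + chain_uncovered d n * int (Psi_restr cycle6 {0, d} {})"
    and "chain_excused d (Suc n) =
           (chain_free d n - chain_uncovered d n) * int (Psi_restr cycle6 {0, d} {0, d})
           + chain_excused d n * (int (Psi_restr cycle6 {d} {d}) - int (Psi_restr cycle6 {0, d} {d}))
           + chain_uncovered d n * int (Psi_restr cycle6 {0, d} {d})"
  using Psi_restr_chain_edges_Suc[OF assms, of "{}" "{}" n]
    Psi_restr_chain_edges_Suc[OF assms, of "{d}" "{}" n]
    Psi_restr_chain_edges_Suc[OF assms, of "{d}" "{d}" n] hex_vertex_exit[of d n] assms(1)
  by (simp_all add: chain_free_def chain_uncovered_def chain_excused_def Psi_restr_cycle6
      insert_commute algebra_simps)

lemma chain_free_para_recurrence:
  "chain_free 3 (n + 3) = 5 * chain_free 3 (n + 2) - 4 * chain_free 3 (n + 1) + 4 * chain_free 3 n"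
  "chain_free 3 1 = 5" "chain_free 3 2 = 25"
proof -
  have step: "chain_free 3 (Suc m) = 3 * chain_free 3 m - 2 * chain_uncovered 3 m + 4 * chain_excused 3 m"
    "chain_uncovered 3 (Suc m) = chain_free 3 m"
    "chain_excused 3 (Suc m) = chain_free 3 m + 2 * chain_excused 3 m" for m
    using chain_state_Suc[of 3 m, unfolded Psi_restr_cycle6] by (simp_all add: algebra_simps)
  have "chain_free 3 (Suc (Suc (Suc n))) =
          5 * chain_free 3 (Suc (Suc n)) - 4 * chain_free 3 (Suc n) + 4 * chain_free 3 n"
    by (simp add: step algebra_simps)
  then show "chain_free 3 (n + 3) = 5 * chain_free 3 (n + 2) - 4 * chain_free 3 (n + 1) + 4 * chain_free 3 n"
    by (simp add: eval_nat_numeral)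
  show "chain_free 3 1 = 5" "chain_free 3 2 = 25"
    using step[of 0] step[of 1] by (simp_all add: chain_state_0 numeral_2_eq_2)
qed

lemma chain_free_meta_recurrence:
  "chain_free 2 (n + 3) = 6 * chain_free 2 (n + 2) - 3 * chain_free 2 (n + 1) + 2 * chain_free 2 n"
  "chain_free 2 1 = 5" "chain_free 2 2 = 25"
proof -
  have step: "chain_free 2 (Suc m) = 3 * chain_free 2 m - 2 * chain_uncovered 2 m + 4 * chain_excused 2 m"
    "chain_uncovered 2 (Suc m) = chain_excused 2 m"
    "chain_excused 2 (Suc m) = 2 * chain_free 2 m - 2 * chain_uncovered 2 m + 3 * chain_excused 2 m" for m
    using chain_state_Suc[of 2 m, unfolded Psi_restr_cycle6] by (simp_all add: algebra_simps)
  have "chain_free 2 (Suc (Suc (Suc n))) =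
          6 * chain_free 2 (Suc (Suc n)) - 3 * chain_free 2 (Suc n) + 2 * chain_free 2 n"
    by (simp add: step algebra_simps)
  then show "chain_free 2 (n + 3) = 6 * chain_free 2 (n + 2) - 3 * chain_free 2 (n + 1) + 2 * chain_free 2 n"
    by (simp add: eval_nat_numeral)
  show "chain_free 2 1 = 5" "chain_free 2 2 = 25"
    using step[of 0] step[of 1] by (simp_all add: chain_state_0 numeral_2_eq_2)
qed

lemma chain_free_ortho_recurrence:
  "chain_free 1 (n + 3) = 4 * chain_free 1 (n + 2) + 4 * chain_free 1 (n + 1) + chain_free 1 n"
  "chain_free 1 1 = 5" "chain_free 1 2 = 25"
proof -
  have step: "chain_free 1 (Suc m) = 3 * chain_free 1 m - 2 * chain_uncovered 1 m + 4 * chain_excused 1 m"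
    "chain_uncovered 1 (Suc m) = chain_free 1 m - chain_uncovered 1 m + chain_excused 1 m"
    "chain_excused 1 (Suc m) = 2 * chain_free 1 m - chain_uncovered 1 m + 2 * chain_excused 1 m" for m
    using chain_state_Suc[of 1 m, unfolded Psi_restr_cycle6] by (simp_all add: algebra_simps)
  (* The default simp rule One_nat_def would turn chain_free 1 into chain_free (Suc 0), out of
     reach of step; the same happens below to the initial values chain_free d 1. *)
  have "chain_free 1 (Suc (Suc (Suc n))) =
          4 * chain_free 1 (Suc (Suc n)) + 4 * chain_free 1 (Suc n) + chain_free 1 n"
    by (simp add: step algebra_simps del: One_nat_def)
  then show "chain_free 1 (n + 3) = 4 * chain_free 1 (n + 2) + 4 * chain_free 1 (n + 1) + chain_free 1 n"
    by (simp add: eval_nat_numeral)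
  show "chain_free 1 1 = 5" "chain_free 1 2 = 25"
    using step[of 0] step[of 1] by (simp_all add: chain_state_0 numeral_2_eq_2)
qed

section \<open>Generating functions\<close>

lemma fps_linear_recurrence3:
  fixes a :: "nat \<Rightarrow> 'a::field"
  assumes rec: "\<And>n. a (n + 3) = p * a (n + 2) + q * a (n + 1) + r * a n"
    and init: "a 0 = c0" "a 1 = p * a 0 + c1" "a 2 = p * a 1 + q * a 0 + c2"
  shows "Abs_fps a = (fps_const c0 + fps_const c1 * fps_X + fps_const c2 * fps_X ^ 2) /
                     (1 - fps_const p * fps_X - fps_const q * fps_X ^ 2 - fps_const r * fps_X ^ 3)"
    (is "_ = ?N / ?D")
proof -
  have "Abs_fps a * ?D = ?N"
  proof (rule fps_ext)
    fix n
    have "Abs_fps a * ?D = Abs_fps a - fps_const p * (fps_X ^ 1 * Abs_fps a)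
        - fps_const q * (fps_X ^ 2 * Abs_fps a) - fps_const r * (fps_X ^ 3 * Abs_fps a)"
      by (simp add: algebra_simps)
    then have "fps_nth (Abs_fps a * ?D) n = a n - (if n < 1 then 0 else p * a (n - 1))
        - (if n < 2 then 0 else q * a (n - 2)) - (if n < 3 then 0 else r * a (n - 3))"
      by (simp only: fps_sub_nth fps_mult_left_const_nth fps_X_power_mult_nth) simp
    moreover have "n = 0 \<or> n = 1 \<or> n = 2 \<or> (\<exists>m. n = m + 3)" by presburger
    ultimately show "fps_nth (Abs_fps a * ?D) n = fps_nth ?N n"
      using init by (auto simp: fps_X_power_nth rec)
  qed
  moreover have "?D \<noteq> 0"
  proof
    assume "?D = 0"
    then have "fps_nth ?D 0 = 0" by simp
    then show False by simp
  qed
  ultimately show ?thesis by (metis nonzero_mult_div_cancel_right)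
qed

lemma real_psi_seq: "real (psi_seq d n) = of_int (chain_free d n)"
proof (cases "n = 0")
  case True then show ?thesis by (simp add: psi_seq_def chain_state_0)
next
  case False then show ?thesis
    by (simp add: psi_seq_def chain_free_def Psi_eq_Psi_restr empty_notin_chain_edges)
qed

lemma fps_psi_seq_para:
  "Abs_fps (\<lambda>n. real (psi_seq 3 n)) = (1 + 4 * fps_X ^ 2) / (1 - 5 * fps_X + 4 * fps_X ^ 2 - 4 * fps_X ^ 3)"
proof -
  have "Abs_fps (\<lambda>n. real (psi_seq 3 n)) =
          (fps_const 1 + fps_const 0 * fps_X + fps_const 4 * fps_X ^ 2) /
          (1 - fps_const 5 * fps_X - fps_const (-4) * fps_X ^ 2 - fps_const 4 * fps_X ^ 3)"
    by (rule fps_linear_recurrence3)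
      (simp_all add: real_psi_seq chain_free_para_recurrence chain_state_0 del: One_nat_def)
  then show ?thesis by (simp add: fps_numeral_fps_const flip: fps_const_neg)
qed

lemma fps_psi_seq_meta:
  "Abs_fps (\<lambda>n. real (psi_seq 2 n)) = (1 - fps_X - 2 * fps_X ^ 2) / (1 - 6 * fps_X + 3 * fps_X ^ 2 - 2 * fps_X ^ 3)"
proof -
  have "Abs_fps (\<lambda>n. real (psi_seq 2 n)) =
          (fps_const 1 + fps_const (-1) * fps_X + fps_const (-2) * fps_X ^ 2) /
          (1 - fps_const 6 * fps_X - fps_const (-3) * fps_X ^ 2 - fps_const 2 * fps_X ^ 3)"
    by (rule fps_linear_recurrence3)
      (simp_all add: real_psi_seq chain_free_meta_recurrence chain_state_0 del: One_nat_def)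
  then show ?thesis by (simp add: fps_numeral_fps_const flip: fps_const_neg)
qed

lemma fps_psi_seq_ortho:
  "Abs_fps (\<lambda>n. real (psi_seq 1 n)) = (1 + fps_X + fps_X ^ 2) / (1 - 4 * fps_X - 4 * fps_X ^ 2 - fps_X ^ 3)"
proof -
  have "Abs_fps (\<lambda>n. real (psi_seq 1 n)) =
          (fps_const 1 + fps_const 1 * fps_X + fps_const 1 * fps_X ^ 2) /
          (1 - fps_const 4 * fps_X - fps_const 4 * fps_X ^ 2 - fps_const 1 * fps_X ^ 3)"
    by (rule fps_linear_recurrence3)
      (simp_all add: real_psi_seq chain_free_ortho_recurrence chain_state_0 del: One_nat_def)
  then show ?thesis by (simp add: fps_numeral_fps_const)
qed

theorem theorem3p4:
  shows "Abs_fps (\<lambda>n. real (psi_seq 3 n)) =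
           (1 + 4 * fps_X ^ 2) / (1 - 5 * fps_X + 4 * fps_X ^ 2 - 4 * fps_X ^ 3) \<and>
         Abs_fps (\<lambda>n. real (psi_seq 2 n)) =
           (1 - fps_X - 2 * fps_X ^ 2) / (1 - 6 * fps_X + 3 * fps_X ^ 2 - 2 * fps_X ^ 3) \<and>
         Abs_fps (\<lambda>n. real (psi_seq 1 n)) =
           (1 + fps_X + fps_X ^ 2) / (1 - 4 * fps_X - 4 * fps_X ^ 2 - fps_X ^ 3)"
  using fps_psi_seq_para fps_psi_seq_meta fps_psi_seq_ortho by blast

end
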